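(* For every integer $k\ge0$ and every $x\in U_k$, $\{d_{U_k}(x,x'):x'\in U_k,\ x'\ne x\}=\{k-2j: j=0,1,\ldots,\lfloor\frac{k-1}{2}\rfloor\}$.
   Context: For metric spaces $X,Y$ and $a>0$, $X\overset{a}{\sqcup}Y$ is the disjoint union with the original metrics on each part and distance $a$ between points of different parts. The sequence $(U_k)_{k\ge0}$: $U_0$ is a one-point space, $U_1$ is a two-point space with distance $1$, and $U_k=U_{k-2}\overset{k}{\sqcup}U_{k-2}$ for $k>1$. (For $k=0$ the right-hand set is empty.) *)

theory Defs
  imports Main Complex_Main
begin

(* The spaces U_k, realised concretely.  A point of U_(k+2) = U_k \<sqcup>^(k+2) U_k is
   a tag b (which copy) followed by a point of U_k.  U_0 = {[]}, U_1 = {[False],[True]}. *)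
fun Upts :: "nat \<Rightarrow> bool list set" where
  "Upts 0 = {[]}"
| "Upts (Suc 0) = {[False], [True]}"
| "Upts (Suc (Suc k)) = {b # x | b x. x \<in> Upts k}"

fun Ud :: "nat \<Rightarrow> bool list \<Rightarrow> bool list \<Rightarrow> real" where
  "Ud 0 x y = 0"
| "Ud (Suc 0) x y = (if x = y then 0 else 1)"
| "Ud (Suc (Suc k)) x y =
     (if hd x = hd y then Ud k (tl x) (tl y) else real (Suc (Suc k)))"

end

theory Submission
  imports Defs
begin

text \<open>Seen from a point of one copy of \<open>U\<^sub>k\<close> inside \<open>U\<^sub>k\<^sub>+\<^sub>2\<close>, the other copy
  contributes the single new distance \<open>k + 2\<close> and its own copy contributes exactly
  the distances of \<open>U\<^sub>k\<close>. Starting from \<open>\<emptyset>\<close> for \<open>U\<^sub>0\<close> and \<open>{1}\<close> for \<open>U\<^sub>1\<close>, the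
  distances from any point of \<open>U\<^sub>k\<close> are therefore \<open>k, k - 2, k - 4, \<dots>\<close>, down to 1 or 2.\<close>

lemma Upts_Suc_Suc_minus:
  "Upts (Suc (Suc k)) - {b # y} = (#) (\<not> b) ` Upts k \<union> (#) b ` (Upts k - {y})"
  by auto

lemma Ud_image_Upts_Suc_Suc:
  assumes "y \<in> Upts k"
  shows "Ud (Suc (Suc k)) (b # y) ` (Upts (Suc (Suc k)) - {b # y})
           = insert (real (Suc (Suc k))) (Ud k y ` (Upts k - {y}))"
proof -
  have other_copy: "Ud (Suc (Suc k)) (b # y) ` (#) (\<not> b) ` Upts k = {real (Suc (Suc k))}"
    using assms by auto
  have own_copy: "Ud (Suc (Suc k)) (b # y) ` (#) b ` (Upts k - {y}) = Ud k y ` (Upts k - {y})"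
    unfolding image_image by simp
  show ?thesis
    unfolding Upts_Suc_Suc_minus image_Un other_copy own_copy by simp
qed

lemma descending_by_2_Suc_Suc:
  "(\<lambda>j. real (Suc (Suc k)) - 2 * real j) ` {j. 2 * j < Suc (Suc k)}
     = insert (real (Suc (Suc k))) ((\<lambda>j. real k - 2 * real j) ` {j. 2 * j < k})"
proof -
  have "j \<in> insert 0 (Suc ` {j. 2 * j < k})" if "2 * j < Suc (Suc k)" for j
    using that by (cases j) auto
  then have "{j. 2 * j < Suc (Suc k)} = insert 0 (Suc ` {j. 2 * j < k})"
    by auto
  then show ?thesis
    by (simp add: image_image)
qed

lemma Ud_image_Upts:
  assumes "x \<in> Upts k"
  shows "Ud k x ` (Upts k - {x}) = (\<lambda>j. real k - 2 * real j) ` {j. 2 * j < k}"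
  using assms
proof (induction k arbitrary: x rule: Upts.induct)
  case 1
  then show ?case by simp
next
  case 2
  then show ?case by auto
next
  case (3 k)
  then obtain b y where x: "x = b # y" and y: "y \<in> Upts k" by auto
  show ?case
    unfolding x Ud_image_Upts_Suc_Suc[OF y] "3.IH"[OF y] descending_by_2_Suc_Suc ..
qed

lemma le_pred_div_2_iff: "int j \<le> (int k - 1) div 2 \<longleftrightarrow> 2 * j < k"
  by presburger

theorem claim6:
  fixes k :: nat and x :: "bool list"
  assumes "x \<in> Upts k"
  shows "{Ud k x x' | x'. x' \<in> Upts k \<and> x' \<noteq> x}
         = {real k - 2 * real j | j :: nat. int j \<le> (int k - 1) div 2}"
proof -
  have "{Ud k x x' | x'. x' \<in> Upts k \<and> x' \<noteq> x} = Ud k x ` (Upts k - {x})"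
    by (auto simp: image_iff)
  also have "\<dots> = (\<lambda>j. real k - 2 * real j) ` {j. 2 * j < k}"
    using assms by (rule Ud_image_Upts)
  also have "\<dots> = {real k - 2 * real j | j :: nat. int j \<le> (int k - 1) div 2}"
    by (simp add: image_Collect le_pred_div_2_iff)
  finally show ?thesis .
qed

end
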